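(* Let $\Omega=(0,1)$, let $\Lambda,\beta,\gamma,\mu$ be positive Hölder continuous functions on $[0,1]$, and fix $d_S>0$. Let $\tilde S$ be the unique positive solution of $-d_S\tilde S''=\Lambda-\tilde S$ on $(0,1)$, $\tilde S'(0)=\tilde S'(1)=0$, and assume that the set $\{x\in[0,1]:\beta(x)\tilde S(x)>\gamma(x)+\mu(x)\}$ is nonempty. Then for every sequence $d_{I,n}\to0$ and every sequence $(S_n,I_n)$ of positive solutions of (E) on $\Omega=(0,1)$ with $d_I=d_{I,n}$, there is a subsequence along which $S_n\to S_0$ uniformly on $[0,1]$ for some $S_0\in C([0,1])$ with $S_0>0$ on $[0,1]$, and $\int_0^1 I_n\,dx\to I_0$ for some constant $I_0>0$.
   Context: Problem (E) on $\Omega=(0,1)$ is the steady-state system $$-d_SS''=\Lambda(x)-S-\beta(x)SI+\gamma(x)I,\qquad -d_II''=\beta(x)SI-[\gamma(x)+\mu(x)]I\quad\text{in }(0,1),$$ with $S'(0)=S'(1)=I'(0)=I'(1)=0$; a positive solution means $S>0$, $I>0$ on $[0,1]$. *)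

theory Defs
  imports "HOL-Analysis.Analysis"
begin

definition holder_on01 :: "(real \<Rightarrow> real) \<Rightarrow> bool" where
  "holder_on01 f \<longleftrightarrow> (\<exists>\<alpha> C. 0 < \<alpha> \<and> \<alpha> \<le> 1 \<and>
      (\<forall>x\<in>{0..1}. \<forall>y\<in>{0..1}. \<bar>f x - f y\<bar> \<le> C * \<bar>x - y\<bar> powr \<alpha>))"

definition neumann_C2 :: "(real \<Rightarrow> real) \<Rightarrow> (real \<Rightarrow> real) \<Rightarrow> (real \<Rightarrow> real) \<Rightarrow> bool" where
  "neumann_C2 u u1 u2 \<longleftrightarrow>
     (\<forall>x\<in>{0..1}. (u has_real_derivative u1 x) (at x within {0..1})) \<and>
     continuous_on {0..1} u1 \<and>
     (\<forall>x\<in>{0<..<1}. (u1 has_real_derivative u2 x) (at x)) \<and>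
     u1 0 = 0 \<and> u1 1 = 0"

definition pos_sol_scalar :: "real \<Rightarrow> (real \<Rightarrow> real) \<Rightarrow> (real \<Rightarrow> real) \<Rightarrow> bool" where
  "pos_sol_scalar dS \<Lambda> St \<longleftrightarrow>
     (\<exists>St1 St2. neumann_C2 St St1 St2 \<and>
        (\<forall>x\<in>{0<..<1}. - dS * St2 x = \<Lambda> x - St x)) \<and>
     (\<forall>x\<in>{0..1}. St x > 0)"

definition pos_sol_E :: "real \<Rightarrow> real \<Rightarrow> (real \<Rightarrow> real) \<Rightarrow> (real \<Rightarrow> real) \<Rightarrow> (real \<Rightarrow> real)
    \<Rightarrow> (real \<Rightarrow> real) \<Rightarrow> (real \<Rightarrow> real) \<Rightarrow> (real \<Rightarrow> real) \<Rightarrow> bool" where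
  "pos_sol_E dS dI \<Lambda> \<beta> \<gamma> \<mu> S I \<longleftrightarrow>
     (\<exists>S1 S2 I1 I2. neumann_C2 S S1 S2 \<and> neumann_C2 I I1 I2 \<and>
        (\<forall>x\<in>{0<..<1}.
           - dS * S2 x = \<Lambda> x - S x - \<beta> x * S x * I x + \<gamma> x * I x \<and>
           - dI * I2 x = \<beta> x * S x * I x - (\<gamma> x + \<mu> x) * I x)) \<and>
     (\<forall>x\<in>{0..1}. S x > 0 \<and> I x > 0)"

end

theory Submission
  imports Defs "HOL-Complex_Analysis.Great_Picard"
begin

(* The maximum principle traps every S-component between the bounds of \<Lambda> and \<gamma>/\<beta>, and
   integrating the sum of the two equations gives the balance law \<integral>\<mu> I = \<integral>\<Lambda> - \<integral>S, so
   \<integral>I is bounded.  The S-equation then yields a Lipschitz bound for S that is uniform in dI, and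
   Arzela-Ascoli together with Bolzano-Weierstrass provide the subsequence.
   The substance is that \<integral>I stays away from 0.  If \<integral>I were small, the difference St - S, which
   solves dS w'' = w - I (\<beta> S - \<gamma>) with a forcing that is small in L^1, would be small from
   above.  Then \<beta> S - \<gamma> - \<mu> stays above a positive constant on a subinterval [x1, x2] where
   \<beta> St > \<gamma> + \<mu>, and a Sturm comparison of I with the sine of half-period x2 - x1 shows that
   the I-equation has no positive solution there once dI is small. *)

lemma holder_on01_imp_continuous_on:
  assumes "holder_on01 f"
  shows "continuous_on {0..1} f"
  unfolding continuous_on_def
proof
  obtain \<alpha> C where \<alpha>: "0 < \<alpha>"
    and H: "\<And>x y. x \<in> {0..1} \<Longrightarrow> y \<in> {0..1} \<Longrightarrow> \<bar>f y - f x\<bar> \<le> C * \<bar>y - x\<bar> powr \<alpha>"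
    using assms unfolding holder_on01_def by blast
  fix x :: real assume x: "x \<in> {0..1}"
  have "((\<lambda>y. \<bar>y - x\<bar>) \<longlongrightarrow> 0) (at x within {0..1})"
    by (intro tendsto_rabs_zero LIM_zero tendsto_ident_at)
  then have lim: "((\<lambda>y. C * \<bar>y - x\<bar> powr \<alpha>) \<longlongrightarrow> 0) (at x within {0..1})"
    using \<alpha> by (intro tendsto_mult_right_zero tendsto_zero_powrI[where b=\<alpha>] tendsto_const) auto
  have "\<forall>\<^sub>F y in at x within {0..1}. norm (f y - f x) \<le> C * \<bar>y - x\<bar> powr \<alpha>"
    using H x by (simp add: eventually_at_filter)
  then have "((\<lambda>y. f y - f x) \<longlongrightarrow> 0) (at x within {0..1})"
    using lim by (rule Lim_null_comparison)
  then show "(f \<longlongrightarrow> f x) (at x within {0..1})"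
    by (simp add: LIM_zero_iff)
qed

lemma abs_diff_le_of_dominating_derivative:
  fixes f g :: "real \<Rightarrow> real"
  assumes "a \<le> b" and cont: "continuous_on {a..b} f" "continuous_on {a..b} g"
    and f': "\<And>x. a < x \<Longrightarrow> x < b \<Longrightarrow> (f has_real_derivative f' x) (at x)"
    and g': "\<And>x. a < x \<Longrightarrow> x < b \<Longrightarrow> (g has_real_derivative g' x) (at x)"
    and dom: "\<And>x. a < x \<Longrightarrow> x < b \<Longrightarrow> \<bar>f' x\<bar> \<le> g' x"
  shows "\<bar>f b - f a\<bar> \<le> g b - g a"
proof -
  have "g a - f a \<le> g b - f b"
  proof (rule DERIV_nonneg_imp_increasing_open[OF \<open>a \<le> b\<close> _ continuous_on_diff[OF cont(2,1)]])
    fix x assume x: "a < x" "x < b"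
    show "\<exists>y. ((\<lambda>x. g x - f x) has_real_derivative y) (at x) \<and> 0 \<le> y"
      using DERIV_diff[OF g'[OF x] f'[OF x]] dom[OF x] by (auto simp: abs_le_iff)
  qed
  moreover have "g a + f a \<le> g b + f b"
  proof (rule DERIV_nonneg_imp_increasing_open[OF \<open>a \<le> b\<close> _ continuous_on_add[OF cont(2,1)]])
    fix x assume x: "a < x" "x < b"
    show "\<exists>y. ((\<lambda>x. g x + f x) has_real_derivative y) (at x) \<and> 0 \<le> y"
      using DERIV_add[OF g'[OF x] f'[OF x]] dom[OF x] by (auto simp: abs_le_iff)
  qed
  ultimately show ?thesis by linarith
qed

lemma lipschitz_of_derivative_bound:
  fixes f :: "real \<Rightarrow> real"
  assumes deriv: "\<And>x. x \<in> {a..b} \<Longrightarrow> (f has_real_derivative f' x) (at x within {a..b})"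
    and bound: "\<And>x. x \<in> {a..b} \<Longrightarrow> \<bar>f' x\<bar> \<le> B"
    and "x \<in> {a..b}" "y \<in> {a..b}"
  shows "\<bar>f x - f y\<bar> \<le> B * \<bar>x - y\<bar>"
proof -
  have "\<bar>f t - f s\<bar> \<le> B * (t - s)" if "s \<le> t" "s \<in> {a..b}" "t \<in> {a..b}" for s t
  proof -
    have sub: "{s..t} \<subseteq> {a..b}" using that by auto
    have "continuous_on {s..t} f"
      using continuous_on_subset[OF DERIV_continuous_on[OF deriv] sub] by blast
    moreover have "(f has_real_derivative f' x) (at x)" if "s < x" "x < t" for x
      using deriv[of x] sub that at_within_Icc_at[of a x b] by auto
    ultimately have "\<bar>f t - f s\<bar> \<le> B * t - B * s"
      using bound sub \<open>s \<le> t\<close>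
      by (intro abs_diff_le_of_dominating_derivative[where g'="\<lambda>_. B"])
        (auto intro!: derivative_eq_intros continuous_intros)
    then show ?thesis by (simp add: right_diff_distrib)
  qed
  from this[of x y] this[of y x] assms(3,4) show ?thesis
    by (cases "x \<le> y") (auto simp: abs_minus_commute)
qed

lemma convex_increasing_from_nonneg_slope:
  fixes u :: "real \<Rightarrow> real"
  assumes "a < b" and cont: "continuous_on {a..b} u" "continuous_on {a..b} u'"
    and d1: "\<And>x. a < x \<Longrightarrow> x < b \<Longrightarrow> (u has_real_derivative u' x) (at x)"
    and d2: "\<And>x. a < x \<Longrightarrow> x < b \<Longrightarrow> (u' has_real_derivative u'' x) (at x)"
    and convex: "\<And>x. a < x \<Longrightarrow> x < b \<Longrightarrow> u'' x > 0" and "u' a \<ge> 0"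
  shows "u a < u b"
proof (rule DERIV_pos_imp_increasing_open[OF \<open>a < b\<close> _ cont(1)])
  fix x assume x: "a < x" "x < b"
  have "u' a < u' x"
  proof (rule DERIV_pos_imp_increasing_open[OF \<open>a < x\<close>])
    show "\<exists>z. (u' has_real_derivative z) (at y) \<and> z > 0" if "a < y" "y < x" for y
    proof -
      have "a < y" "y < b" using that x by linarith+
      then show ?thesis using d2 convex by blast
    qed
    show "continuous_on {a..x} u'"
      using continuous_on_subset[OF cont(2)] x by auto
  qed
  with \<open>u' a \<ge> 0\<close> show "\<exists>y. (u has_real_derivative y) (at x) \<and> y > 0"
    using d1[OF x] by (intro exI[of _ "u' x"]) simp
qed

lemma convex_decreasing_to_nonpos_slope:
  fixes u :: "real \<Rightarrow> real"
  assumes "a < b" and cont: "continuous_on {a..b} u" "continuous_on {a..b} u'"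
    and d1: "\<And>x. a < x \<Longrightarrow> x < b \<Longrightarrow> (u has_real_derivative u' x) (at x)"
    and d2: "\<And>x. a < x \<Longrightarrow> x < b \<Longrightarrow> (u' has_real_derivative u'' x) (at x)"
    and convex: "\<And>x. a < x \<Longrightarrow> x < b \<Longrightarrow> u'' x > 0" and "u' b \<le> 0"
  shows "u b < u a"
proof (rule DERIV_neg_imp_decreasing_open[OF \<open>a < b\<close> _ cont(1)])
  fix x assume x: "a < x" "x < b"
  have "u' x < u' b"
  proof (rule DERIV_pos_imp_increasing_open[OF \<open>x < b\<close>])
    show "\<exists>z. (u' has_real_derivative z) (at y) \<and> z > 0" if "x < y" "y < b" for y
    proof -
      have "a < y" "y < b" using that x by linarith+
      then show ?thesis using d2 convex by blast
    qed
    show "continuous_on {x..b} u'"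
      using continuous_on_subset[OF cont(2)] x by auto
  qed
  with \<open>u' b \<le> 0\<close> show "\<exists>y. (u has_real_derivative y) (at x) \<and> y < 0"
    using d1[OF x] by (intro exI[of _ "u' x"]) simp
qed

(* Integrating v'' \<ge> m - p twice from the maximum point a: v' t \<ge> (t - a) m - K, hence
   0 \<ge> v b - v a \<ge> (b - a) ((b - a) m / 2 - K). *)
lemma convexity_bound_at_left_max:
  fixes v v' v'' P p :: "real \<Rightarrow> real"
  assumes "a < b"
    and cont: "continuous_on {a..b} v" "continuous_on {a..b} v'" "continuous_on {a..b} P"
    and d1: "\<And>x. a < x \<Longrightarrow> x < b \<Longrightarrow> (v has_real_derivative v' x) (at x)"
    and d2: "\<And>x. a < x \<Longrightarrow> x < b \<Longrightarrow> (v' has_real_derivative v'' x) (at x)"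
    and dP: "\<And>x. a < x \<Longrightarrow> x < b \<Longrightarrow> (P has_real_derivative p x) (at x)"
    and lower: "\<And>x. a < x \<Longrightarrow> x < b \<Longrightarrow> m - p x \<le> v'' x"
    and "0 \<le> v' a" and P_incr: "\<And>t. t \<in> {a..b} \<Longrightarrow> P t - P a \<le> K"
    and "v b \<le> v a"
  shows "(b - a) * m \<le> 2 * K"
proof -
  have slope: "(t - a) * m - K \<le> v' t" if t: "a \<le> t" "t \<le> b" for t
  proof -
    have "v' a - (a - a) * m + P a \<le> v' t - (t - a) * m + P t"
    proof (rule DERIV_nonneg_imp_increasing_open[OF \<open>a \<le> t\<close>])
      fix x assume x: "a < x" "x < t"
      then have x': "a < x" "x < b" using t by linarith+
      show "\<exists>y. ((\<lambda>s. v' s - (s - a) * m + P s) has_real_derivative y) (at x) \<and> 0 \<le> y"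
        using d2[OF x'] dP[OF x'] lower[OF x']
        by (intro exI[of _ "v'' x - m + p x"] conjI) (auto intro!: derivative_eq_intros)
    next
      have "{a..t} \<subseteq> {a..b}" using t by auto
      then show "continuous_on {a..t} (\<lambda>s. v' s - (s - a) * m + P s)"
        using cont by (intro continuous_intros) (auto elim: continuous_on_subset)
    qed
    then show ?thesis using \<open>0 \<le> v' a\<close> P_incr[of t] t by simp
  qed
  have "v a - (a - a)\<^sup>2 * m / 2 + (a - a) * K \<le> v b - (b - a)\<^sup>2 * m / 2 + (b - a) * K"
  proof (rule DERIV_nonneg_imp_increasing_open[OF less_imp_le[OF \<open>a < b\<close>]])
    fix x assume x: "a < x" "x < b"
    show "\<exists>y. ((\<lambda>s. v s - (s - a)\<^sup>2 * m / 2 + (s - a) * K) has_real_derivative y) (at x) \<and> 0 \<le> y"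
      using d1[OF x] slope[of x] x
      by (intro exI[of _ "v' x - (x - a) * m + K"] conjI) (auto intro!: derivative_eq_intros)
  qed (use cont in \<open>auto intro!: continuous_intros\<close>)
  then have "(b - a) * ((b - a) * m) \<le> (b - a) * (2 * K)"
    using \<open>v b \<le> v a\<close> by (simp add: power2_eq_square field_simps)
  then show ?thesis using \<open>a < b\<close> by simp
qed

lemma convexity_bound_at_right_max:
  fixes v v' v'' P p :: "real \<Rightarrow> real"
  assumes "a < b"
    and cont: "continuous_on {a..b} v" "continuous_on {a..b} v'" "continuous_on {a..b} P"
    and d1: "\<And>x. a < x \<Longrightarrow> x < b \<Longrightarrow> (v has_real_derivative v' x) (at x)"
    and d2: "\<And>x. a < x \<Longrightarrow> x < b \<Longrightarrow> (v' has_real_derivative v'' x) (at x)"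
    and dP: "\<And>x. a < x \<Longrightarrow> x < b \<Longrightarrow> (P has_real_derivative p x) (at x)"
    and lower: "\<And>x. a < x \<Longrightarrow> x < b \<Longrightarrow> m - p x \<le> v'' x"
    and "v' b \<le> 0" and P_incr: "\<And>t. t \<in> {a..b} \<Longrightarrow> P b - P t \<le> K"
    and "v a \<le> v b"
  shows "(b - a) * m \<le> 2 * K"
proof -
  have cont_mirror: "continuous_on {- b..- a} (\<lambda>s. f (- s))" if "continuous_on {a..b} f" for f
    by (rule continuous_on_compose2[OF that]) (auto intro: continuous_intros)
  have "(- a - - b) * m \<le> 2 * K"
  proof (rule convexity_bound_at_left_max[where v="\<lambda>s. v (- s)" and v'="\<lambda>s. - v' (- s)"
        and v''="\<lambda>s. v'' (- s)" and P="\<lambda>s. - P (- s)" and p="\<lambda>s. p (- s)"])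
    fix x assume x: "- b < x" "x < - a"
    then have x': "a < - x" "- x < b" by linarith+
    show "((\<lambda>s. v (- s)) has_real_derivative - v' (- x)) (at x)"
      using d1[OF x'] by (simp add: DERIV_mirror)
    show "((\<lambda>s. - v' (- s)) has_real_derivative v'' (- x)) (at x)"
      using DERIV_minus[OF iffD1[OF DERIV_mirror d2[OF x']]] by simp
    show "((\<lambda>s. - P (- s)) has_real_derivative p (- x)) (at x)"
      using DERIV_minus[OF iffD1[OF DERIV_mirror dP[OF x']]] by simp
    show "m - p (- x) \<le> v'' (- x)" using lower[OF x'] .
  qed (use assms in \<open>auto intro!: continuous_on_minus cont_mirror\<close>)
  then show ?thesis by simp
qed

(* The Wronskian z of I and sin (w (x - x1)) would have to rise from - w I x1 to w I x2, but
   z' = sin (w (x - x1)) (I'' + w\<^sup>2 I) < 0. *)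
lemma sturm_no_positive_solution:
  fixes I I' I'' q :: "real \<Rightarrow> real"
  assumes "x1 < x2" and cont: "continuous_on {x1..x2} I" "continuous_on {x1..x2} I'"
    and d1: "\<And>x. x1 < x \<Longrightarrow> x < x2 \<Longrightarrow> (I has_real_derivative I' x) (at x)"
    and d2: "\<And>x. x1 < x \<Longrightarrow> x < x2 \<Longrightarrow> (I' has_real_derivative I'' x) (at x)"
    and pos: "\<And>x. x \<in> {x1..x2} \<Longrightarrow> I x > 0" and "d > 0"
    and eq: "\<And>x. x1 < x \<Longrightarrow> x < x2 \<Longrightarrow> d * I'' x + q x * I x = 0"
    and large: "\<And>x. x1 < x \<Longrightarrow> x < x2 \<Longrightarrow> q x > d * (pi / (x2 - x1))\<^sup>2"
  shows False
proof -
  define w where "w = pi / (x2 - x1)"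
  have w: "w > 0" "w * (x2 - x1) = pi" using \<open>x1 < x2\<close> by (auto simp: w_def)
  define z where "z x = I' x * sin (w * (x - x1)) - I x * w * cos (w * (x - x1))" for x
  have "0 < I x1 * w" "0 < I x2 * w" using pos[of x1] pos[of x2] \<open>x1 < x2\<close> w by auto
  then have "z x1 < z x2" using w by (simp add: z_def)
  moreover have "z x2 < z x1"
  proof (rule DERIV_neg_imp_decreasing_open[OF \<open>x1 < x2\<close>])
    fix x assume x: "x1 < x" "x < x2"
    have "(z has_real_derivative sin (w * (x - x1)) * (I'' x + w\<^sup>2 * I x)) (at x)"
      unfolding z_def using d1[OF x] d2[OF x]
      by (auto intro!: derivative_eq_intros simp: algebra_simps power2_eq_square)
    moreover have "sin (w * (x - x1)) > 0"
    proof (rule sin_gt_zero)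
      have "w * (x - x1) < w * (x2 - x1)" using w(1) x by simp
      then show "w * (x - x1) < pi" using w(2) by simp
    qed (use w x in simp)
    moreover have "I'' x + w\<^sup>2 * I x < 0"
    proof -
      have "d * (I'' x + w\<^sup>2 * I x) = (d * w\<^sup>2 - q x) * I x"
        using eq[OF x] by (simp add: algebra_simps)
      also have "\<dots> < 0"
        using large[OF x] pos[of x] x by (simp add: w_def mult_neg_pos)
      finally show ?thesis using \<open>d > 0\<close> by (simp add: mult_less_0_iff)
    qed
    ultimately show "\<exists>y. (z has_real_derivative y) (at x) \<and> y < 0"
      by (blast intro: mult_pos_neg)
  next
    show "continuous_on {x1..x2} z"
      unfolding z_def by (intro continuous_intros cont)
  qed
  ultimately show False by linarith
qed

lemma integral_upto_diff_le:
  fixes I :: "real \<Rightarrow> real"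
  assumes cI: "continuous_on {0..1} I" and I_nonneg: "\<And>x. x \<in> {0..1} \<Longrightarrow> 0 \<le> I x"
    and "s \<in> {0..1}" "t \<in> {0..1}"
  shows "integral {0..t} I - integral {0..s} I \<le> integral {0..1} I"
proof -
  have "integral {0..t} I \<le> integral {0..1} I"
    using assms by (intro integral_subset_le integrable_continuous_interval continuous_on_subset[OF cI]) auto
  moreover have "0 \<le> integral {0..s} I"
    using assms by (intro integral_nonneg integrable_continuous_interval continuous_on_subset[OF cI]) auto
  ultimately show ?thesis by linarith
qed

lemma continuous_on_01_gt_on_subinterval:
  fixes f :: "real \<Rightarrow> real"
  assumes "continuous_on {0..1} f" "xs \<in> {0..1}" "c < f xs"
  obtains x1 x2 where "0 \<le> x1" "x1 < x2" "x2 \<le> 1" "\<And>y. y \<in> {x1..x2} \<Longrightarrow> c < f y"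
proof -
  obtain \<rho> where "\<rho> > 0" and \<rho>: "\<forall>y\<in>{0..1}. dist y xs < \<rho> \<longrightarrow> dist (f y) (f xs) < f xs - c"
    using assms unfolding continuous_on_iff by (meson diff_gt_0_iff_gt)
  define x1 where "x1 = max 0 (xs - \<rho> / 2)"
  define x2 where "x2 = min 1 (xs + \<rho> / 2)"
  have "c < f y" if "y \<in> {x1..x2}" for y
  proof -
    have "y \<in> {0..1}" "dist y xs < \<rho>"
      using that \<open>\<rho> > 0\<close> by (auto simp: x1_def x2_def dist_real_def)
    then show ?thesis using \<rho> by (auto simp: dist_real_def)
  qed
  moreover have "0 \<le> x1" "x1 < x2" "x2 \<le> 1"
    using assms(2) \<open>\<rho> > 0\<close> by (auto simp: x1_def x2_def)
  ultimately show thesis using that by blast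
qed

lemma uniformly_lipschitz_imp_uniform_limit_subseq:
  fixes f :: "nat \<Rightarrow> 'a::euclidean_space \<Rightarrow> 'b::{real_normed_vector,heine_borel}"
  assumes "compact S" and bounded: "\<And>n x. x \<in> S \<Longrightarrow> norm (f n x) \<le> M"
    and lip: "\<And>n x y. x \<in> S \<Longrightarrow> y \<in> S \<Longrightarrow> norm (f n x - f n y) \<le> L * norm (x - y)"
  obtains g and r :: "nat \<Rightarrow> nat" where "continuous_on S g" "strict_mono r"
    "uniform_limit S (\<lambda>n. f (r n)) g sequentially"
proof -
  have equicont: "\<exists>d>0. \<forall>n y. y \<in> S \<and> norm (x - y) < d \<longrightarrow> norm (f n x - f n y) < e"
    if "x \<in> S" "0 < e" for x e
  proof (intro exI[of _ "e / (\<bar>L\<bar> + 1)"] conjI allI impI)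
    show "0 < e / (\<bar>L\<bar> + 1)" using \<open>0 < e\<close> by simp
    fix n y assume y: "y \<in> S \<and> norm (x - y) < e / (\<bar>L\<bar> + 1)"
    have "norm (f n x - f n y) \<le> L * norm (x - y)"
      using lip \<open>x \<in> S\<close> y by blast
    also have "\<dots> \<le> (\<bar>L\<bar> + 1) * norm (x - y)"
      by (intro mult_right_mono) auto
    also have "\<dots> < e"
      using y by (simp add: pos_less_divide_eq mult.commute)
    finally show "norm (f n x - f n y) < e" .
  qed
  obtain g and r :: "nat \<Rightarrow> nat" where "continuous_on S g" "strict_mono r"
    and conv: "\<And>e. 0 < e \<Longrightarrow> \<exists>N. \<forall>n x. n \<ge> N \<and> x \<in> S \<longrightarrow> norm (f (r n) x - g x) < e"
  proof (rule Arzela_Ascoli[OF \<open>compact S\<close>])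
    show "norm (f n x) \<le> M" if "x \<in> S" for n x using bounded that .
    show "\<exists>d. 0 < d \<and> (\<forall>n y. y \<in> S \<and> norm (x - y) < d \<longrightarrow> norm (f n x - f n y) < e)"
      if "x \<in> S" "0 < e" for x e using equicont[OF that] by blast
  qed (rule that)
  moreover have "uniform_limit S (\<lambda>n. f (r n)) g sequentially"
    unfolding uniform_limit_sequentially_iff dist_norm using conv by fastforce
  ultimately show thesis using that by blast
qed

lemma uniformly_lipschitz_imp_common_convergent_subseq:
  fixes f :: "nat \<Rightarrow> 'a::euclidean_space \<Rightarrow> 'b::{real_normed_vector,heine_borel}"
    and a :: "nat \<Rightarrow> 'c::metric_space"
  assumes "compact S" and bounded: "\<And>n x. x \<in> S \<Longrightarrow> norm (f n x) \<le> M"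
    and lip: "\<And>n x y. x \<in> S \<Longrightarrow> y \<in> S \<Longrightarrow> norm (f n x - f n y) \<le> L * norm (x - y)"
    and "compact K" "\<And>n. a n \<in> K"
  obtains r :: "nat \<Rightarrow> nat" and g l where "strict_mono r" "continuous_on S g"
    "uniform_limit S (\<lambda>n. f (r n)) g sequentially" "l \<in> K" "(\<lambda>n. a (r n)) \<longlonglongrightarrow> l"
proof -
  obtain g and r1 :: "nat \<Rightarrow> nat" where g: "continuous_on S g" "strict_mono r1"
    and f_lim: "uniform_limit S (\<lambda>n. f (r1 n)) g sequentially"
  proof (rule uniformly_lipschitz_imp_uniform_limit_subseq[OF \<open>compact S\<close>])
    show "norm (f n x) \<le> M" if "x \<in> S" for n x using bounded that .
    show "norm (f n x - f n y) \<le> L * norm (x - y)" if "x \<in> S" "y \<in> S" for n x y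
      using lip that .
  qed (rule that)
  have "\<forall>n. a (r1 n) \<in> K" using assms(5) by blast
  then obtain l and r2 :: "nat \<Rightarrow> nat" where "l \<in> K" "strict_mono r2"
    and a_lim: "((\<lambda>n. a (r1 n)) \<circ> r2) \<longlonglongrightarrow> l"
    by (rule seq_compactE[OF compact_imp_seq_compact[OF \<open>compact K\<close>]]) (rule that)
  have "uniform_limit S (\<lambda>n. f (r1 (r2 n))) g sequentially"
    using filterlim_compose[OF f_lim filterlim_subseq[OF \<open>strict_mono r2\<close>]] by simp
  moreover have "strict_mono (r1 \<circ> r2)" using g(2) \<open>strict_mono r2\<close> by (rule strict_mono_o)
  ultimately show thesis
    using that[of "r1 \<circ> r2"] g(1) \<open>l \<in> K\<close> a_lim by (simp add: o_def)
qed

lemma neumann_C2_continuous_on: "neumann_C2 u u1 u2 \<Longrightarrow> continuous_on {0..1} u"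
  unfolding neumann_C2_def using DERIV_continuous_on by blast

lemma neumann_C2_continuous_on_deriv: "neumann_C2 u u1 u2 \<Longrightarrow> continuous_on {0..1} u1"
  unfolding neumann_C2_def by blast

lemma neumann_C2_has_derivative:
  "neumann_C2 u u1 u2 \<Longrightarrow> x \<in> {0<..<1} \<Longrightarrow> (u has_real_derivative u1 x) (at x)"
  unfolding neumann_C2_def
  by (metis at_within_Icc_at greaterThanLessThan_iff atLeastAtMost_iff less_imp_le)

lemma neumann_C2_has_second_derivative:
  "neumann_C2 u u1 u2 \<Longrightarrow> x \<in> {0<..<1} \<Longrightarrow> (u1 has_real_derivative u2 x) (at x)"
  unfolding neumann_C2_def by blast

lemma neumann_C2_boundary: "neumann_C2 u u1 u2 \<Longrightarrow> u1 0 = 0 \<and> u1 1 = 0"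
  unfolding neumann_C2_def by blast

lemma neumann_C2_diff:
  assumes "neumann_C2 u u1 u2" "neumann_C2 v v1 v2"
  shows "neumann_C2 (\<lambda>x. u x - v x) (\<lambda>x. u1 x - v1 x) (\<lambda>x. u2 x - v2 x)"
  using assms unfolding neumann_C2_def by (auto intro!: DERIV_diff continuous_on_diff)

lemma neumann_C2_minus:
  "neumann_C2 u u1 u2 \<Longrightarrow> neumann_C2 (\<lambda>x. - u x) (\<lambda>x. - u1 x) (\<lambda>x. - u2 x)"
  unfolding neumann_C2_def by (auto intro!: DERIV_minus continuous_on_minus)

lemma neumann_C2_lipschitz:
  assumes "neumann_C2 u u1 u2"
  obtains L where "0 \<le> L" "\<And>x y. x \<in> {0..1} \<Longrightarrow> y \<in> {0..1} \<Longrightarrow> \<bar>u x - u y\<bar> \<le> L * \<bar>x - y\<bar>"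
proof -
  obtain L where L: "\<And>x. x \<in> {0..1} \<Longrightarrow> \<bar>u1 x\<bar> \<le> L"
    using compact_imp_bounded[OF compact_continuous_image[OF neumann_C2_continuous_on_deriv[OF assms]
        compact_Icc]]
    by (force simp: bounded_real)
  have "\<bar>u x - u y\<bar> \<le> L * \<bar>x - y\<bar>" if "x \<in> {0..1}" "y \<in> {0..1}" for x y
    using assms that L unfolding neumann_C2_def by (intro lipschitz_of_derivative_bound) auto
  moreover have "0 \<le> L" using L[of 0] by simp
  ultimately show thesis using that by blast
qed

lemma neumann_C2_deriv_bound:
  fixes u u1 u2 I :: "real \<Rightarrow> real"
  assumes sol: "neumann_C2 u u1 u2" and "d > 0" "0 \<le> A" "0 \<le> B"
    and bound: "\<And>x. x \<in> {0<..<1} \<Longrightarrow> \<bar>d * u2 x\<bar> \<le> A + B * I x"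
    and cI: "continuous_on {0..1} I" and I_nonneg: "\<And>x. x \<in> {0..1} \<Longrightarrow> 0 \<le> I x"
    and x: "x \<in> {0..1}"
  shows "\<bar>u1 x\<bar> \<le> (A + B * integral {0..1} I) / d"
proof -
  define G where "G t = (A * t + B * integral {0..t} I) / d" for t
  have dI: "((\<lambda>t. integral {0..t} I) has_real_derivative I t) (at t within {0..1})"
    if "t \<in> {0..1}" for t
    using integral_has_real_derivative[OF cI that] .
  have sub: "{0..x} \<subseteq> {0..1}" using x by auto
  have "\<bar>u1 x - u1 0\<bar> \<le> G x - G 0"
  proof (rule abs_diff_le_of_dominating_derivative[where f'=u2 and g'="\<lambda>t. (A + B * I t) / d"])
    show "continuous_on {0..x} u1"
      using continuous_on_subset[OF neumann_C2_continuous_on_deriv[OF sol] sub] .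
    show "continuous_on {0..x} G"
      unfolding G_def using continuous_on_subset[OF DERIV_continuous_on[OF dI] sub] \<open>d > 0\<close>
      by (intro continuous_intros) auto
    fix t assume t: "0 < t" "t < x"
    then have t01: "t \<in> {0<..<1}" using x by auto
    show "(u1 has_real_derivative u2 t) (at t)"
      by (rule neumann_C2_has_second_derivative[OF sol t01])
    show "(G has_real_derivative (A + B * I t) / d) (at t)"
      unfolding G_def using dI[of t] t01 at_within_Icc_at[of 0 t 1] \<open>d > 0\<close>
      by (auto intro!: derivative_eq_intros simp: field_simps)
    show "\<bar>u2 t\<bar> \<le> (A + B * I t) / d"
      using bound[OF t01] \<open>d > 0\<close> by (simp add: abs_mult field_simps)
  qed (use x in auto)
  also have "G x - G 0 \<le> (A + B * integral {0..1} I) / d"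
  proof -
    have "A * x \<le> A" using x \<open>0 \<le> A\<close> by (simp add: mult_left_le)
    moreover have "B * integral {0..x} I \<le> B * integral {0..1} I"
      using integral_upto_diff_le[OF cI I_nonneg _ x, of 0] \<open>0 \<le> B\<close>
      by (intro mult_left_mono) auto
    ultimately show ?thesis
      using \<open>d > 0\<close> by (simp add: G_def divide_right_mono)
  qed
  finally show ?thesis using neumann_C2_boundary[OF sol] by simp
qed

lemma neumann_C2_max_principle:
  assumes sol: "neumann_C2 u u1 u2"
    and convex: "\<And>x. x \<in> {0<..<1} \<Longrightarrow> u x > K \<Longrightarrow> u2 x > 0"
    and "x \<in> {0..1}"
  shows "u x \<le> K"
proof -
  note cont = neumann_C2_continuous_on[OF sol] neumann_C2_continuous_on_deriv[OF sol]
  obtain x0 where x0: "x0 \<in> {0..1}" "\<And>y. y \<in> {0..1} \<Longrightarrow> u y \<le> u x0"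
    using continuous_attains_sup[OF compact_Icc _ cont(1)] by auto
  have "u x0 \<le> K"
  proof (rule ccontr)
    assume "\<not> u x0 \<le> K"
    then obtain d where "d > 0"
      and d: "\<forall>y\<in>{0..1}. dist y x0 < d \<longrightarrow> dist (u y) (u x0) < u x0 - K"
      using cont(1) x0(1) unfolding continuous_on_iff by (meson diff_gt_0_iff_gt not_le)
    have near: "u y > K" if "y \<in> {0..1}" "\<bar>y - x0\<bar> < d" for y
      using d that by (auto simp: dist_real_def)
    have derivs: "(u has_real_derivative u1 y) (at y)" "(u1 has_real_derivative u2 y) (at y)"
      "u2 y > 0" if "y \<in> {0<..<1}" "\<bar>y - x0\<bar> < d" for y
      using that neumann_C2_has_derivative[OF sol] neumann_C2_has_second_derivative[OF sol]
        convex near by auto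
    have bc: "u1 0 = 0" "u1 1 = 0" using neumann_C2_boundary[OF sol] by auto
    show False
    proof (cases "x0 < 1 \<and> u1 x0 \<ge> 0")
      case True
      define b where "b = min 1 (x0 + d / 2)"
      have b: "x0 < b" "b \<le> 1" "b - x0 < d" using True \<open>d > 0\<close> by (auto simp: b_def)
      have "u x0 < u b"
      proof (rule convex_increasing_from_nonneg_slope[where u''=u2, OF \<open>x0 < b\<close>])
        show "continuous_on {x0..b} u" "continuous_on {x0..b} u1"
          using continuous_on_subset[OF cont(1)] continuous_on_subset[OF cont(2)] x0(1) b by auto
      qed (use True x0(1) b derivs in auto)
      then show False using x0(1) x0(2)[of b] b by auto
    next
      case False
      then have "0 < x0" "u1 x0 \<le> 0" using bc x0(1) by (auto simp: less_le)
      define a where "a = max 0 (x0 - d / 2)"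
      have a: "a < x0" "0 \<le> a" "x0 - a < d" using \<open>0 < x0\<close> \<open>d > 0\<close> by (auto simp: a_def)
      have "u x0 < u a"
      proof (rule convex_decreasing_to_nonpos_slope[where u''=u2, OF \<open>a < x0\<close>])
        show "continuous_on {a..x0} u" "continuous_on {a..x0} u1"
          using continuous_on_subset[OF cont(1)] continuous_on_subset[OF cont(2)] x0(1) a by auto
      qed (use \<open>u1 x0 \<le> 0\<close> x0(1) a derivs in auto)
      then show False using x0(1) x0(2)[of a] a by auto
    qed
  qed
  then show ?thesis using x0 assms(3) by fastforce
qed

lemma neumann_C2_min_principle:
  assumes "neumann_C2 u u1 u2"
    and "\<And>x. x \<in> {0<..<1} \<Longrightarrow> u x < k \<Longrightarrow> u2 x < 0"
    and "x \<in> {0..1}"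
  shows "k \<le> u x"
  using neumann_C2_max_principle[OF neumann_C2_minus[OF assms(1)], of "- k"] assms(2,3)
  by fastforce

lemma neumann_C2_deriv_zero_at_max:
  assumes sol: "neumann_C2 u u1 u2" and "x0 \<in> {0..1}"
    and max: "\<And>y. y \<in> {0..1} \<Longrightarrow> u y \<le> u x0"
  shows "u1 x0 = 0"
proof -
  consider "x0 = 0" | "x0 = 1" | "x0 \<in> {0<..<1}" using \<open>x0 \<in> {0..1}\<close> by fastforce
  then show ?thesis
  proof cases
    case 3
    show ?thesis
    proof (rule DERIV_local_max[OF neumann_C2_has_derivative[OF sol 3]])
      show "0 < min x0 (1 - x0)" using 3 by auto
      show "\<forall>y. \<bar>x0 - y\<bar> < min x0 (1 - x0) \<longrightarrow> u y \<le> u x0"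
        using max by (auto simp: abs_if split: if_splits)
    qed
  qed (use neumann_C2_boundary[OF sol] in auto)
qed

lemma neumann_C2_growth_bound_near_max:
  fixes v v1 v2 P p :: "real \<Rightarrow> real"
  assumes sol: "neumann_C2 v v1 v2"
    and x0: "x0 \<in> {0..1}" and max: "\<And>y. y \<in> {0..1} \<Longrightarrow> v y \<le> v x0"
    and h: "0 < h" "h \<le> 1/2"
    and cP: "continuous_on {0..1} P" and dP: "\<And>y. y \<in> {0<..<1} \<Longrightarrow> (P has_real_derivative p y) (at y)"
    and P_diff: "\<And>s t. s \<in> {0..1} \<Longrightarrow> t \<in> {0..1} \<Longrightarrow> P t - P s \<le> K"
    and lower: "\<And>y. y \<in> {0<..<1} \<Longrightarrow> \<bar>y - x0\<bar> \<le> h \<Longrightarrow> m - p y \<le> v2 y"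
  shows "h * m \<le> 2 * K"
proof -
  note cont = neumann_C2_continuous_on[OF sol] neumann_C2_continuous_on_deriv[OF sol]
  have v1x0: "v1 x0 = 0" by (rule neumann_C2_deriv_zero_at_max[OF sol x0 max])
  have derivs: "(v has_real_derivative v1 y) (at y)" "(v1 has_real_derivative v2 y) (at y)"
    "(P has_real_derivative p y) (at y)" "m - p y \<le> v2 y"
    if "y \<in> {0<..<1}" "\<bar>y - x0\<bar> \<le> h" for y
    using that neumann_C2_has_derivative[OF sol] neumann_C2_has_second_derivative[OF sol] dP lower
    by auto
  show ?thesis
  proof (cases "x0 \<le> 1/2")
    case True
    then have sub: "{x0..x0 + h} \<subseteq> {0..1}" using x0 h by auto
    have "(x0 + h - x0) * m \<le> 2 * K"
    proof (rule convexity_bound_at_left_max[where v'=v1 and v''=v2 and P=P and p=p])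
      show "continuous_on {x0..x0 + h} v" "continuous_on {x0..x0 + h} v1"
        "continuous_on {x0..x0 + h} P"
        using continuous_on_subset[OF cont(1) sub] continuous_on_subset[OF cont(2) sub]
          continuous_on_subset[OF cP sub] by auto
    qed (use h v1x0 x0 sub max P_diff derivs in auto)
    then show ?thesis by simp
  next
    case False
    then have sub: "{x0 - h..x0} \<subseteq> {0..1}" using x0 h by auto
    have "(x0 - (x0 - h)) * m \<le> 2 * K"
    proof (rule convexity_bound_at_right_max[where v'=v1 and v''=v2 and P=P and p=p])
      show "continuous_on {x0 - h..x0} v" "continuous_on {x0 - h..x0} v1"
        "continuous_on {x0 - h..x0} P"
        using continuous_on_subset[OF cont(1) sub] continuous_on_subset[OF cont(2) sub]
          continuous_on_subset[OF cP sub] by auto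
    qed (use h v1x0 x0 sub max P_diff derivs in auto)
    then show ?thesis by simp
  qed
qed

(* Near a maximum above \<eta> the Lipschitz bound keeps v \<ge> \<eta>/2 on an interval of length h, so
   dS v'' \<ge> \<eta>/2 - C I there, which the convexity bound turns into a lower bound for the integral of I. *)
lemma neumann_C2_le_of_small_forcing:
  fixes v v1 v2 g I :: "real \<Rightarrow> real"
  assumes sol: "neumann_C2 v v1 v2" and "dS > 0"
    and eq: "\<And>x. x \<in> {0<..<1} \<Longrightarrow> dS * v2 x = v x - g x"
    and forcing: "\<And>x. x \<in> {0<..<1} \<Longrightarrow> g x \<le> C * I x"
    and cI: "continuous_on {0..1} I" and I_nonneg: "\<And>x. x \<in> {0..1} \<Longrightarrow> 0 \<le> I x"
    and lip: "\<And>x y. x \<in> {0..1} \<Longrightarrow> y \<in> {0..1} \<Longrightarrow> \<bar>v x - v y\<bar> \<le> L * \<bar>x - y\<bar>"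
    and "L > 0" "\<eta> > 0" "C > 0"
    and small: "C * integral {0..1} I < \<eta> * min (1/2) (\<eta> / (2 * L)) / 4"
    and "x \<in> {0..1}"
  shows "v x \<le> \<eta>"
proof -
  obtain x0 where x0: "x0 \<in> {0..1}" and max: "\<And>y. y \<in> {0..1} \<Longrightarrow> v y \<le> v x0"
    using continuous_attains_sup[OF compact_Icc _ neumann_C2_continuous_on[OF sol]] by auto
  have "v x0 \<le> \<eta>"
  proof (rule ccontr)
    assume "\<not> v x0 \<le> \<eta>"
    define h where "h = min (1/2) (\<eta> / (2 * L))"
    have h: "0 < h" "h \<le> 1/2" "L * h \<le> \<eta> / 2"
      using \<open>L > 0\<close> \<open>\<eta> > 0\<close> by (auto simp: h_def min_def field_simps)
    define P where "P t = C / dS * integral {0..t} I" for t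
    have dI: "((\<lambda>t. integral {0..t} I) has_real_derivative I t) (at t within {0..1})"
      if "t \<in> {0..1}" for t
      using integral_has_real_derivative[OF cI that] .
    have "h * (\<eta> / 2 / dS) \<le> 2 * (C / dS * integral {0..1} I)"
    proof (rule neumann_C2_growth_bound_near_max[OF sol x0 max h(1,2), where P=P])
      show "continuous_on {0..1} P"
        unfolding P_def using DERIV_continuous_on[OF dI] by (intro continuous_intros)
      show "(P has_real_derivative C / dS * I t) (at t)" if "t \<in> {0<..<1}" for t
        unfolding P_def using dI[of t] that at_within_Icc_at[of 0 t 1] \<open>dS > 0\<close>
        by (auto intro!: derivative_eq_intros)
      show "P t - P s \<le> C / dS * integral {0..1} I" if "s \<in> {0..1}" "t \<in> {0..1}" for s t
      proof -
        have "C / dS * (integral {0..t} I - integral {0..s} I) \<le> C / dS * integral {0..1} I"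
          using integral_upto_diff_le[OF cI I_nonneg that] \<open>C > 0\<close> \<open>dS > 0\<close>
          by (intro mult_left_mono) auto
        then show ?thesis by (simp add: P_def right_diff_distrib)
      qed
      show "\<eta> / 2 / dS - C / dS * I y \<le> v2 y" if "y \<in> {0<..<1}" "\<bar>y - x0\<bar> \<le> h" for y
      proof -
        have "\<bar>v y - v x0\<bar> \<le> L * h"
          using lip[of y x0] x0 that \<open>L > 0\<close> by (auto intro: order_trans mult_left_mono)
        then have "\<eta> / 2 - C * I y \<le> dS * v2 y"
          using eq[OF that(1)] forcing[OF that(1)] h \<open>\<not> v x0 \<le> \<eta>\<close> by linarith
        then show ?thesis using \<open>dS > 0\<close> by (simp add: field_simps)
      qed
    qed
    then have "h * \<eta> \<le> 4 * (C * integral {0..1} I)" using \<open>dS > 0\<close> by (simp add: field_simps)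
    then show False using small by (simp add: h_def algebra_simps)
  qed
  then show ?thesis using max \<open>x \<in> {0..1}\<close> by fastforce
qed

lemma pos_sol_E_cases:
  assumes "pos_sol_E dS dI \<Lambda> \<beta> \<gamma> \<mu> S I"
  obtains S1 S2 I1 I2 where "neumann_C2 S S1 S2" "neumann_C2 I I1 I2"
    "\<And>x. x \<in> {0<..<1} \<Longrightarrow> - dS * S2 x = \<Lambda> x - S x - \<beta> x * S x * I x + \<gamma> x * I x"
    "\<And>x. x \<in> {0<..<1} \<Longrightarrow> - dI * I2 x = \<beta> x * S x * I x - (\<gamma> x + \<mu> x) * I x"
    "\<And>x. x \<in> {0..1} \<Longrightarrow> 0 < S x" "\<And>x. x \<in> {0..1} \<Longrightarrow> 0 < I x"
  using assms unfolding pos_sol_E_def by blast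

(* Smin and Smax bound both \<Lambda> and \<gamma>/\<beta>; by the maximum principle they trap the
   S-component of every positive solution of (E). *)
locale sis_model =
  fixes \<Lambda> \<beta> \<gamma> \<mu> :: "real \<Rightarrow> real" and dS \<Lambda>max \<beta>max \<mu>min Smin Smax :: real
  assumes continuous: "continuous_on {0..1} \<Lambda>" "continuous_on {0..1} \<beta>"
      "continuous_on {0..1} \<gamma>" "continuous_on {0..1} \<mu>"
    and dS_pos: "0 < dS" and \<beta>_pos: "\<And>x. x \<in> {0..1} \<Longrightarrow> 0 < \<beta> x"
    and \<mu>min_pos: "0 < \<mu>min" and Smin_pos: "0 < Smin"
    and bounds: "\<And>x. x \<in> {0..1} \<Longrightarrow> \<Lambda> x \<le> \<Lambda>max \<and> \<beta> x \<le> \<beta>max \<and> \<mu>min \<le> \<mu> x"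
    and S_range: "\<And>x. x \<in> {0..1} \<Longrightarrow>
      Smin \<le> \<Lambda> x \<and> \<Lambda> x \<le> Smax \<and> Smin * \<beta> x \<le> \<gamma> x \<and> \<gamma> x \<le> Smax * \<beta> x"
begin

lemma \<beta>max_pos: "0 < \<beta>max" and Smax_pos: "0 < Smax"
  using bounds[of 0] S_range[of 0] \<beta>_pos[of 0] Smin_pos by auto

lemma sol_S_bounds:
  assumes "pos_sol_E dS dI \<Lambda> \<beta> \<gamma> \<mu> S I" and x: "x \<in> {0..1}"
  shows "Smin \<le> S x \<and> S x \<le> Smax"
proof -
  obtain S1 S2 I1 I2 where nS: "neumann_C2 S S1 S2"
    and eqS: "\<And>x. x \<in> {0<..<1} \<Longrightarrow> - dS * S2 x = \<Lambda> x - S x - \<beta> x * S x * I x + \<gamma> x * I x"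
    and I_pos: "\<And>x. x \<in> {0..1} \<Longrightarrow> 0 < I x"
    using pos_sol_E_cases[OF assms(1)] by metis
  have eqS': "- dS * S2 y = (\<Lambda> y - S y) + (\<gamma> y - \<beta> y * S y) * I y" if "y \<in> {0<..<1}" for y
    using eqS[OF that] by (simp add: algebra_simps)
  have "S x \<le> Smax"
  proof (rule neumann_C2_max_principle[OF nS _ x])
    fix y assume y: "y \<in> {0<..<1}" and "Smax < S y"
    moreover have "Smax * \<beta> y < S y * \<beta> y"
      using \<open>Smax < S y\<close> \<beta>_pos[of y] y by (intro mult_strict_right_mono) auto
    ultimately have "\<gamma> y - \<beta> y * S y < 0" "\<Lambda> y - S y < 0"
      using S_range[of y] by (auto simp: mult.commute)
    then have "(\<Lambda> y - S y) + (\<gamma> y - \<beta> y * S y) * I y < 0"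
      using I_pos[of y] y by (simp add: add_neg_neg mult_neg_pos)
    then have "0 < dS * S2 y" using eqS'[OF y] by linarith
    then show "0 < S2 y" using dS_pos by (simp add: zero_less_mult_iff)
  qed
  moreover have "Smin \<le> S x"
  proof (rule neumann_C2_min_principle[OF nS _ x])
    fix y assume y: "y \<in> {0<..<1}" and "S y < Smin"
    moreover have "S y * \<beta> y < Smin * \<beta> y"
      using \<open>S y < Smin\<close> \<beta>_pos[of y] y by (intro mult_strict_right_mono) auto
    ultimately have "0 < \<gamma> y - \<beta> y * S y" "0 < \<Lambda> y - S y"
      using S_range[of y] by (auto simp: mult.commute)
    then have "0 < (\<Lambda> y - S y) + (\<gamma> y - \<beta> y * S y) * I y"
      using I_pos[of y] y by (simp add: add_pos_pos)
    then have "dS * S2 y < 0" using eqS'[OF y] by linarith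
    then show "S2 y < 0" using dS_pos by (simp add: mult_less_0_iff)
  qed
  ultimately show ?thesis by simp
qed

(* Integrate the sum of the two equations; the derivative terms vanish by the Neumann conditions. *)
lemma sol_integral_balance:
  assumes "pos_sol_E dS dI \<Lambda> \<beta> \<gamma> \<mu> S I"
  shows "integral {0..1} (\<lambda>x. \<Lambda> x - S x - \<mu> x * I x) = 0"
proof -
  obtain S1 S2 I1 I2 where nS: "neumann_C2 S S1 S2" and nI: "neumann_C2 I I1 I2"
    and eqS: "\<And>x. x \<in> {0<..<1} \<Longrightarrow> - dS * S2 x = \<Lambda> x - S x - \<beta> x * S x * I x + \<gamma> x * I x"
    and eqI: "\<And>x. x \<in> {0<..<1} \<Longrightarrow> - dI * I2 x = \<beta> x * S x * I x - (\<gamma> x + \<mu> x) * I x"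
    using pos_sol_E_cases[OF assms] by metis
  define F where "F x = \<Lambda> x - S x - \<mu> x * I x" for x
  have cF: "continuous_on {0..1} F"
    unfolding F_def using continuous neumann_C2_continuous_on[OF nS] neumann_C2_continuous_on[OF nI]
    by (intro continuous_intros) auto
  define Y where "Y t = dS * S1 t + dI * I1 t + integral {0..t} F" for t
  have "Y 1 = Y 0"
  proof (rule DERIV_isconst_end[of 0 1 Y])
    show "continuous_on {0..1} Y"
      unfolding Y_def using neumann_C2_continuous_on_deriv[OF nS] neumann_C2_continuous_on_deriv[OF nI]
        DERIV_continuous_on[OF integral_has_real_derivative[OF cF]]
      by (intro continuous_intros) auto
    fix x :: real assume "0 < x" "x < 1"
    then have x: "x \<in> {0<..<1}" by simp
    have "(Y has_real_derivative dS * S2 x + dI * I2 x + F x) (at x)"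
      unfolding Y_def using integral_has_real_derivative[OF cF, of x] at_within_Icc_at[of 0 x 1] x
      by (intro DERIV_add DERIV_cmult neumann_C2_has_second_derivative[OF nS x]
          neumann_C2_has_second_derivative[OF nI x]) auto
    moreover have "dS * S2 x + dI * I2 x + F x = 0"
      using eqS[OF x] eqI[OF x] by (simp add: F_def algebra_simps)
    ultimately show "(Y has_real_derivative 0) (at x)" by simp
  qed simp
  then show ?thesis
    using neumann_C2_boundary[OF nS] neumann_C2_boundary[OF nI] by (simp add: Y_def F_def[abs_def])
qed

lemma sol_integral_I_nonneg:
  assumes "pos_sol_E dS dI \<Lambda> \<beta> \<gamma> \<mu> S I"
  shows "0 \<le> integral {0..1} I"
proof -
  obtain S1 S2 I1 I2 where "neumann_C2 I I1 I2" and "\<And>x. x \<in> {0..1} \<Longrightarrow> 0 < I x"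
    using pos_sol_E_cases[OF assms] by metis
  then show ?thesis
    by (intro integral_nonneg integrable_continuous_interval neumann_C2_continuous_on)
      (auto intro: less_imp_le)
qed

lemma sol_integral_I_le:
  assumes sol: "pos_sol_E dS dI \<Lambda> \<beta> \<gamma> \<mu> S I"
  shows "integral {0..1} I \<le> \<Lambda>max / \<mu>min"
proof -
  obtain S1 S2 I1 I2 where nS: "neumann_C2 S S1 S2" and nI: "neumann_C2 I I1 I2"
    and S_pos: "\<And>x. x \<in> {0..1} \<Longrightarrow> 0 < S x" and I_pos: "\<And>x. x \<in> {0..1} \<Longrightarrow> 0 < I x"
    using pos_sol_E_cases[OF sol] by metis
  have int: "f integrable_on {0..1}" if "continuous_on {0..1} f" for f :: "real \<Rightarrow> real"
    using that by (rule integrable_continuous_interval)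
  note cI = neumann_C2_continuous_on[OF nI] and cS = neumann_C2_continuous_on[OF nS]
  have "\<mu>min * integral {0..1} I = integral {0..1} (\<lambda>x. \<mu>min * I x)" by simp
  also have "\<dots> \<le> integral {0..1} (\<lambda>x. \<mu> x * I x)"
  proof (rule integral_le)
    show "(\<lambda>x. \<mu>min * I x) integrable_on {0..1}" "(\<lambda>x. \<mu> x * I x) integrable_on {0..1}"
      using cI continuous(4) by (auto intro!: int continuous_intros)
    show "\<mu>min * I x \<le> \<mu> x * I x" if "x \<in> {0..1}" for x
      using bounds[OF that] I_pos[OF that] by (intro mult_right_mono) auto
  qed
  also have "\<dots> = integral {0..1} \<Lambda> - integral {0..1} S"
  proof -
    have "(\<lambda>x. \<mu> x * I x) integrable_on {0..1}"
      using cI continuous(4) by (auto intro!: int continuous_intros)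
    then show ?thesis
      using sol_integral_balance[OF sol] int[OF continuous(1)] int[OF cS]
      by (simp add: integral_diff Henstock_Kurzweil_Integration.integrable_diff)
  qed
  also have "\<dots> \<le> integral {0..1} (\<lambda>_::real. \<Lambda>max)"
  proof -
    have "0 \<le> integral {0..1} S"
      using S_pos by (intro integral_nonneg int[OF cS]) (auto intro: less_imp_le)
    moreover have "integral {0..1} \<Lambda> \<le> integral {0..1} (\<lambda>_::real. \<Lambda>max)"
      by (rule integral_le) (use bounds int[OF continuous(1)] in auto)
    ultimately show ?thesis by linarith
  qed
  finally show ?thesis using \<mu>min_pos by (simp add: pos_le_divide_eq mult.commute)
qed

definition S_lipschitz_const :: real where
  "S_lipschitz_const = (\<Lambda>max + Smax + 2 * \<beta>max * Smax * (\<Lambda>max / \<mu>min)) / dS"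

lemma S_reaction_bound:
  assumes x: "x \<in> {0..1}" and "0 < s" "s \<le> Smax" "0 \<le> i"
  shows "\<bar>\<Lambda> x - s - \<beta> x * s * i + \<gamma> x * i\<bar> \<le> (\<Lambda>max + Smax) + 2 * \<beta>max * Smax * i"
proof -
  have "\<beta> x * s \<le> \<beta>max * Smax"
    using bounds[OF x] \<beta>_pos[OF x] assms by (intro mult_mono) auto
  moreover have "Smax * \<beta> x \<le> Smax * \<beta>max"
    using bounds[OF x] Smax_pos by (intro mult_left_mono) auto
  ultimately have "(\<beta> x * s + \<gamma> x) * i \<le> (2 * \<beta>max * Smax) * i"
    using S_range[OF x] \<open>0 \<le> i\<close> by (intro mult_right_mono) (auto simp: mult.commute)
  moreover have "0 < \<gamma> x"
    using S_range[OF x] mult_pos_pos[OF Smin_pos \<beta>_pos[OF x]] by linarith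
  then have "0 \<le> \<beta> x * s * i" "0 \<le> \<gamma> x * i" "0 \<le> \<Lambda> x"
    using \<beta>_pos[OF x] assms S_range[OF x] Smin_pos by auto
  ultimately show ?thesis
    using bounds[OF x] \<open>0 < s\<close> \<open>s \<le> Smax\<close> by (simp add: abs_le_iff distrib_right)
qed

lemma sol_S_lipschitz:
  assumes sol: "pos_sol_E dS dI \<Lambda> \<beta> \<gamma> \<mu> S I" and "x \<in> {0..1}" "y \<in> {0..1}"
  shows "\<bar>S x - S y\<bar> \<le> S_lipschitz_const * \<bar>x - y\<bar>"
proof -
  obtain S1 S2 I1 I2 where nS: "neumann_C2 S S1 S2" and nI: "neumann_C2 I I1 I2"
    and eqS: "\<And>x. x \<in> {0<..<1} \<Longrightarrow> - dS * S2 x = \<Lambda> x - S x - \<beta> x * S x * I x + \<gamma> x * I x"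
    and I_pos: "\<And>x. x \<in> {0..1} \<Longrightarrow> 0 < I x"
    using pos_sol_E_cases[OF sol] by metis
  define A where "A = \<Lambda>max + Smax"
  define B where "B = 2 * \<beta>max * Smax"
  have AB: "0 \<le> A" "0 \<le> B"
    using \<beta>max_pos Smax_pos Smin_pos bounds[of 0] S_range[of 0] by (auto simp: A_def B_def)
  have "\<bar>dS * S2 z\<bar> \<le> A + B * I z" if z: "z \<in> {0<..<1}" for z
  proof -
    have z01: "z \<in> {0..1}" using z by auto
    have "\<bar>dS * S2 z\<bar> = \<bar>\<Lambda> z - S z - \<beta> z * S z * I z + \<gamma> z * I z\<bar>"
      using eqS[OF z] by (metis abs_minus_cancel mult_minus_left)
    also have "\<dots> \<le> A + B * I z"
      using S_reaction_bound[OF z01] sol_S_bounds[OF sol z01] Smin_pos I_pos[OF z01]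
      by (simp add: A_def B_def less_imp_le)
    finally show ?thesis .
  qed
  then have "\<bar>S1 t\<bar> \<le> (A + B * integral {0..1} I) / dS" if "t \<in> {0..1}" for t
    using neumann_C2_deriv_bound[OF nS dS_pos AB] neumann_C2_continuous_on[OF nI] I_pos that
    by (simp add: less_imp_le)
  also have "\<dots> \<le> S_lipschitz_const"
  proof -
    have "B * integral {0..1} I \<le> B * (\<Lambda>max / \<mu>min)"
      using sol_integral_I_le[OF sol] AB by (intro mult_left_mono)
    then show ?thesis
      using dS_pos by (simp add: S_lipschitz_const_def A_def B_def divide_right_mono)
  qed
  finally show ?thesis
    using nS assms(2,3) unfolding neumann_C2_def by (intro lipschitz_of_derivative_bound) auto
qed

lemma S_lipschitz_const_nonneg: "0 \<le> S_lipschitz_const"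
  using \<beta>max_pos Smax_pos \<mu>min_pos dS_pos bounds[of 0] S_range[of 0] Smin_pos
  unfolding S_lipschitz_const_def by auto

(* St - S solves dS w'' = w - I (\<beta> S - \<gamma>), whose forcing is at most \<beta>max Smax I. *)
lemma sol_St_minus_S_le:
  assumes St: "pos_sol_scalar dS \<Lambda> St" and "0 \<le> L"
    and lipT: "\<And>x y. x \<in> {0..1} \<Longrightarrow> y \<in> {0..1} \<Longrightarrow> \<bar>St x - St y\<bar> \<le> L * \<bar>x - y\<bar>"
    and sol: "pos_sol_E dS dI \<Lambda> \<beta> \<gamma> \<mu> S I" and "0 < \<eta>"
    and small: "\<beta>max * Smax * integral {0..1} I
      < \<eta> * min (1/2) (\<eta> / (2 * (L + S_lipschitz_const + 1))) / 4"
    and "x \<in> {0..1}"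
  shows "St x - S x \<le> \<eta>"
proof -
  obtain St1 St2 where nT: "neumann_C2 St St1 St2"
    and eqT: "\<And>x. x \<in> {0<..<1} \<Longrightarrow> - dS * St2 x = \<Lambda> x - St x"
    using St unfolding pos_sol_scalar_def by blast
  obtain S1 S2 I1 I2 where nS: "neumann_C2 S S1 S2" and nI: "neumann_C2 I I1 I2"
    and eqS: "\<And>x. x \<in> {0<..<1} \<Longrightarrow> - dS * S2 x = \<Lambda> x - S x - \<beta> x * S x * I x + \<gamma> x * I x"
    and I_pos: "\<And>x. x \<in> {0..1} \<Longrightarrow> 0 < I x"
    using pos_sol_E_cases[OF sol] by metis
  show ?thesis
  proof (rule neumann_C2_le_of_small_forcing[OF neumann_C2_diff[OF nT nS] dS_pos,
        where g="\<lambda>x. I x * (\<beta> x * S x - \<gamma> x)" and I=I])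
    show "dS * (St2 z - S2 z) = St z - S z - I z * (\<beta> z * S z - \<gamma> z)" if "z \<in> {0<..<1}" for z
      using eqT[OF that] eqS[OF that] by (simp add: algebra_simps)
    show "I z * (\<beta> z * S z - \<gamma> z) \<le> \<beta>max * Smax * I z" if "z \<in> {0<..<1}" for z
    proof -
      have z01: "z \<in> {0..1}" using that by auto
      have "\<beta> z * S z \<le> \<beta>max * Smax"
        using bounds[OF z01] \<beta>_pos[OF z01] sol_S_bounds[OF sol z01] Smin_pos by (intro mult_mono) auto
      moreover have "0 < \<gamma> z"
        using S_range[OF z01] mult_pos_pos[OF Smin_pos \<beta>_pos[OF z01]] by linarith
      ultimately show ?thesis
        using I_pos[OF z01] by (simp add: mult.commute mult_left_mono)
    qed
    show "\<bar>(St z - S z) - (St w - S w)\<bar> \<le> (L + S_lipschitz_const + 1) * \<bar>z - w\<bar>"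
      if "z \<in> {0..1}" "w \<in> {0..1}" for z w
    proof -
      have "\<bar>(St z - S z) - (St w - S w)\<bar> \<le> L * \<bar>z - w\<bar> + S_lipschitz_const * \<bar>z - w\<bar>"
        using lipT[OF that] sol_S_lipschitz[OF sol that] by linarith
      then show ?thesis by (simp add: algebra_simps)
    qed
  qed (use neumann_C2_continuous_on[OF nI] I_pos \<open>0 \<le> L\<close> S_lipschitz_const_nonneg \<open>0 < \<eta>\<close>
      \<beta>max_pos Smax_pos small \<open>x \<in> {0..1}\<close> in \<open>auto intro: less_imp_le\<close>)
qed

lemma sol_local_growth_rate_bound:
  assumes sol: "pos_sol_E dS dI \<Lambda> \<beta> \<gamma> \<mu> S I" and "0 < dI"
    and "0 \<le> x1" "x1 < x2" "x2 \<le> 1"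
  shows "\<exists>x\<in>{x1<..<x2}. \<beta> x * S x - \<gamma> x - \<mu> x \<le> dI * (pi / (x2 - x1))\<^sup>2"
proof (rule ccontr)
  assume "\<not> ?thesis"
  then have large: "dI * (pi / (x2 - x1))\<^sup>2 < \<beta> x * S x - \<gamma> x - \<mu> x" if "x1 < x" "x < x2" for x
    using that by (auto simp: not_le)
  obtain S1 S2 I1 I2 where nI: "neumann_C2 I I1 I2"
    and eqI: "\<And>x. x \<in> {0<..<1} \<Longrightarrow> - dI * I2 x = \<beta> x * S x * I x - (\<gamma> x + \<mu> x) * I x"
    and I_pos: "\<And>x. x \<in> {0..1} \<Longrightarrow> 0 < I x"
    using pos_sol_E_cases[OF sol] by metis
  have sub: "{x1..x2} \<subseteq> {0..1}" using assms(3-5) by auto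
  show False
  proof (rule sturm_no_positive_solution[OF \<open>x1 < x2\<close> _ _ _ _ _ \<open>0 < dI\<close>, where I'=I1 and I''=I2])
    show "continuous_on {x1..x2} I" "continuous_on {x1..x2} I1"
      using continuous_on_subset[OF neumann_C2_continuous_on[OF nI] sub]
        continuous_on_subset[OF neumann_C2_continuous_on_deriv[OF nI] sub] by auto
    fix x assume "x1 < x" "x < x2"
    then have x: "x \<in> {0<..<1}" using sub by auto
    show "(I has_real_derivative I1 x) (at x)" by (rule neumann_C2_has_derivative[OF nI x])
    show "(I1 has_real_derivative I2 x) (at x)" by (rule neumann_C2_has_second_derivative[OF nI x])
    show "dI * I2 x + (\<beta> x * S x - \<gamma> x - \<mu> x) * I x = 0"
      using eqI[OF x] by (simp add: algebra_simps)
    show "dI * (pi / (x2 - x1))\<^sup>2 < \<beta> x * S x - \<gamma> x - \<mu> x"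
      using large \<open>x1 < x\<close> \<open>x < x2\<close> by blast
  qed (use I_pos sub in auto)
qed

lemma favourable_subinterval:
  assumes St: "pos_sol_scalar dS \<Lambda> St" and xs: "xs \<in> {0..1}"
    and favourable: "\<gamma> xs + \<mu> xs < \<beta> xs * St xs"
  obtains c x1 x2 where "0 < c" "0 \<le> x1" "x1 < x2" "x2 \<le> 1"
    "\<And>y. y \<in> {x1..x2} \<Longrightarrow> 2 * c < \<beta> y * St y - \<gamma> y - \<mu> y"
proof -
  obtain St1 St2 where nT: "neumann_C2 St St1 St2"
    using St unfolding pos_sol_scalar_def by blast
  define r where "r x = \<beta> x * St x - \<gamma> x - \<mu> x" for x
  define c where "c = r xs / 4"
  have "0 < r xs" using favourable by (simp add: r_def)
  then have "0 < c" "2 * c < r xs" by (simp_all add: c_def)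
  moreover have "continuous_on {0..1} r"
    unfolding r_def using continuous neumann_C2_continuous_on[OF nT] by (intro continuous_intros) auto
  ultimately obtain x1 x2 where "0 \<le> x1" "x1 < x2" "x2 \<le> 1"
    "\<And>y. y \<in> {x1..x2} \<Longrightarrow> 2 * c < r y"
    by (metis continuous_on_01_gt_on_subinterval[OF _ xs])
  with \<open>0 < c\<close> show thesis unfolding r_def by (rule that)
qed

lemma sol_integral_I_lower_bound:
  assumes St: "pos_sol_scalar dS \<Lambda> St" and xs: "xs \<in> {0..1}"
    and favourable: "\<gamma> xs + \<mu> xs < \<beta> xs * St xs"
  obtains \<delta> d0 where "0 < \<delta>" "0 < d0"
    "\<And>dI S I. 0 < dI \<Longrightarrow> dI < d0 \<Longrightarrow> pos_sol_E dS dI \<Lambda> \<beta> \<gamma> \<mu> S I \<Longrightarrow> \<delta> \<le> integral {0..1} I"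
proof -
  obtain St1 St2 where nT: "neumann_C2 St St1 St2"
    using St unfolding pos_sol_scalar_def by blast
  obtain L where "0 \<le> L"
    and lipT: "\<And>x y. x \<in> {0..1} \<Longrightarrow> y \<in> {0..1} \<Longrightarrow> \<bar>St x - St y\<bar> \<le> L * \<bar>x - y\<bar>"
    using neumann_C2_lipschitz[OF nT] by blast
  obtain c x1 x2 where "0 < c" and x12: "0 \<le> x1" "x1 < x2" "x2 \<le> 1"
    and rate: "\<And>y. y \<in> {x1..x2} \<Longrightarrow> 2 * c < \<beta> y * St y - \<gamma> y - \<mu> y"
    using favourable_subinterval[OF St xs favourable] by blast
  define \<eta> where "\<eta> = c / \<beta>max"
  define \<delta> where "\<delta> = \<eta> * min (1/2) (\<eta> / (2 * (L + S_lipschitz_const + 1))) / 4 / (\<beta>max * Smax)"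
  define d0 where "d0 = c / (pi / (x2 - x1))\<^sup>2"
  have "0 < \<eta>" using \<open>0 < c\<close> \<beta>max_pos by (simp add: \<eta>_def)
  show thesis
  proof (rule that)
    show "0 < \<delta>" "0 < d0"
      using \<open>0 < \<eta>\<close> \<open>0 < c\<close> \<open>0 \<le> L\<close> S_lipschitz_const_nonneg \<beta>max_pos Smax_pos x12
      by (auto simp: \<delta>_def d0_def)
    fix dI S I assume "0 < dI" "dI < d0" and sol: "pos_sol_E dS dI \<Lambda> \<beta> \<gamma> \<mu> S I"
    show "\<delta> \<le> integral {0..1} I"
    proof (rule ccontr)
      assume "\<not> \<delta> \<le> integral {0..1} I"
      then have small: "\<beta>max * Smax * integral {0..1} I
          < \<eta> * min (1/2) (\<eta> / (2 * (L + S_lipschitz_const + 1))) / 4"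
        using \<beta>max_pos Smax_pos by (simp add: \<delta>_def field_simps)
      have close: "St x - S x \<le> \<eta>" if "x \<in> {0..1}" for x
        using St \<open>0 \<le> L\<close> lipT sol \<open>0 < \<eta>\<close> small that by (rule sol_St_minus_S_le)
      obtain x where x: "x \<in> {x1<..<x2}"
        and "\<beta> x * S x - \<gamma> x - \<mu> x \<le> dI * (pi / (x2 - x1))\<^sup>2"
        using sol_local_growth_rate_bound[OF sol \<open>0 < dI\<close> x12] by blast
      moreover have "dI * (pi / (x2 - x1))\<^sup>2 < c"
        using \<open>dI < d0\<close> x12 by (simp add: d0_def field_simps)
      moreover have "\<beta> x * (St x - S x) \<le> c"
      proof -
        have x01: "x \<in> {0..1}" using x x12 by auto
        have "\<beta> x * (St x - S x) \<le> \<beta> x * \<eta>"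
          using close[OF x01] \<beta>_pos[OF x01] by (intro mult_left_mono) auto
        also have "\<dots> \<le> \<beta>max * \<eta>"
          using bounds[OF x01] \<open>0 < \<eta>\<close> by (intro mult_right_mono) auto
        finally show ?thesis using \<beta>max_pos by (simp add: \<eta>_def)
      qed
      ultimately show False using rate[of x] x by (auto simp: algebra_simps)
    qed
  qed
qed

lemma sol_subsequence_limits:
  fixes dI :: "nat \<Rightarrow> real" and S I :: "nat \<Rightarrow> real \<Rightarrow> real"
  assumes St: "pos_sol_scalar dS \<Lambda> St"
    and favourable: "xs \<in> {0..1}" "\<gamma> xs + \<mu> xs < \<beta> xs * St xs"
    and dI: "\<And>n. 0 < dI n" "dI \<longlonglongrightarrow> 0"
    and sol: "\<And>n. pos_sol_E dS (dI n) \<Lambda> \<beta> \<gamma> \<mu> (S n) (I n)"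
  obtains r S0 I0 where "strict_mono r" "continuous_on {0..1} S0" "\<And>x. x \<in> {0..1} \<Longrightarrow> 0 < S0 x"
    "uniform_limit {0..1} (\<lambda>n. S (r n)) S0 sequentially"
    "0 < I0" "(\<lambda>n. integral {0..1} (I (r n))) \<longlonglongrightarrow> I0"
proof -
  obtain \<delta> d0 where "0 < \<delta>" "0 < d0"
    and persist: "\<And>dI S I. 0 < dI \<Longrightarrow> dI < d0 \<Longrightarrow> pos_sol_E dS dI \<Lambda> \<beta> \<gamma> \<mu> S I
      \<Longrightarrow> \<delta> \<le> integral {0..1} I"
    using sol_integral_I_lower_bound[OF St favourable] by blast
  obtain r :: "nat \<Rightarrow> nat" and S0 I0 where "strict_mono r" "continuous_on {0..1} S0"
    and S_lim: "uniform_limit {0..1} (\<lambda>n. S (r n)) S0 sequentially"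
    and I_lim: "(\<lambda>n. integral {0..1} (I (r n))) \<longlonglongrightarrow> I0"
  proof (rule uniformly_lipschitz_imp_common_convergent_subseq[where f=S and M=Smax
        and a="\<lambda>n. integral {0..1} (I n)" and K="{0..\<Lambda>max / \<mu>min}"])
    show "norm (S n x) \<le> Smax" if "x \<in> {0..1}" for n x
      using sol_S_bounds[OF sol[of n] that] Smin_pos by auto
    show "norm (S n x - S n y) \<le> S_lipschitz_const * norm (x - y)"
      if "x \<in> {0..1}" "y \<in> {0..1}" for n x y
      using sol_S_lipschitz[OF sol that] by simp
    show "integral {0..1} (I n) \<in> {0..\<Lambda>max / \<mu>min}" for n
      using sol_integral_I_le[OF sol] sol_integral_I_nonneg[OF sol] by auto
  qed (use that in auto)
  have "Smin \<le> S0 x" if "x \<in> {0..1}" for x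
    using tendsto_uniform_limitI[OF S_lim that] sol_S_bounds[OF sol that]
    by (intro tendsto_lowerbound[of "\<lambda>n. S (r n) x"]) auto
  moreover have "\<delta> \<le> I0"
  proof (rule tendsto_lowerbound[OF I_lim])
    have "\<forall>\<^sub>F n in sequentially. dI (r n) < d0"
      using order_tendstoD(2)[OF LIMSEQ_subseq_LIMSEQ[OF dI(2) \<open>strict_mono r\<close>] \<open>0 < d0\<close>]
      by (simp add: o_def)
    then show "\<forall>\<^sub>F n in sequentially. \<delta> \<le> integral {0..1} (I (r n))"
      by eventually_elim (use persist dI(1) sol in blast)
  qed simp
  ultimately show thesis
    using that[OF \<open>strict_mono r\<close> \<open>continuous_on {0..1} S0\<close> _ S_lim _ I_lim] Smin_pos \<open>0 < \<delta>\<close>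
    by fastforce
qed

end

lemma sis_model_exists:
  assumes continuous: "continuous_on {0..1} \<Lambda>" "continuous_on {0..1} \<beta>"
      "continuous_on {0..1} \<gamma>" "continuous_on {0..1} \<mu>"
    and pos: "\<And>x. x \<in> {0..1} \<Longrightarrow> 0 < \<Lambda> x \<and> 0 < \<beta> x \<and> 0 < \<gamma> x \<and> 0 < \<mu> x"
    and "0 < dS"
  obtains \<Lambda>max \<beta>max \<mu>min Smin Smax where "sis_model \<Lambda> \<beta> \<gamma> \<mu> dS \<Lambda>max \<beta>max \<mu>min Smin Smax"
proof -
  have ne: "{0..1::real} \<noteq> {}" by simp
  define q where "q x = min (\<Lambda> x) (\<gamma> x / \<beta> x)" for x
  define Q where "Q x = max (\<Lambda> x) (\<gamma> x / \<beta> x)" for x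
  have "\<beta> x \<noteq> 0" if "x \<in> {0..1}" for x using pos[OF that] by simp
  then have "continuous_on {0..1} (\<lambda>x. \<gamma> x / \<beta> x)"
    using continuous by (intro continuous_intros) auto
  then have cq: "continuous_on {0..1} q" and cQ: "continuous_on {0..1} Q"
    unfolding q_def Q_def using continuous by (auto intro: continuous_intros)
  obtain x1 where x1: "x1 \<in> {0..1}" "\<And>y. y \<in> {0..1} \<Longrightarrow> \<Lambda> y \<le> \<Lambda> x1"
    using continuous_attains_sup[OF compact_Icc ne continuous(1)] by blast
  obtain x2 where x2: "x2 \<in> {0..1}" "\<And>y. y \<in> {0..1} \<Longrightarrow> \<beta> y \<le> \<beta> x2"
    using continuous_attains_sup[OF compact_Icc ne continuous(2)] by blast
  obtain x3 where x3: "x3 \<in> {0..1}" "\<And>y. y \<in> {0..1} \<Longrightarrow> \<mu> x3 \<le> \<mu> y"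
    using continuous_attains_inf[OF compact_Icc ne continuous(4)] by blast
  obtain x4 where x4: "x4 \<in> {0..1}" "\<And>y. y \<in> {0..1} \<Longrightarrow> q x4 \<le> q y"
    using continuous_attains_inf[OF compact_Icc ne cq] by blast
  obtain x5 where x5: "x5 \<in> {0..1}" "\<And>y. y \<in> {0..1} \<Longrightarrow> Q y \<le> Q x5"
    using continuous_attains_sup[OF compact_Icc ne cQ] by blast
  have "sis_model \<Lambda> \<beta> \<gamma> \<mu> dS (\<Lambda> x1) (\<beta> x2) (\<mu> x3) (q x4) (Q x5)"
  proof
    fix x :: real assume x: "x \<in> {0..1}"
    have "q x4 \<le> \<Lambda> x" "q x4 \<le> \<gamma> x / \<beta> x" "\<Lambda> x \<le> Q x5" "\<gamma> x / \<beta> x \<le> Q x5"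
      using x4(2)[OF x] x5(2)[OF x] by (auto simp: q_def Q_def)
    then show "q x4 \<le> \<Lambda> x \<and> \<Lambda> x \<le> Q x5 \<and> q x4 * \<beta> x \<le> \<gamma> x \<and> \<gamma> x \<le> Q x5 * \<beta> x"
      using pos[OF x] by (simp add: le_divide_eq divide_le_eq)
  qed (use assms x1 x2 x3 x4 pos[OF x3(1)] pos[OF x4(1)] in \<open>auto simp: q_def\<close>)
  then show thesis by (rule that)
qed

theorem theorem3p2:
  fixes \<Lambda> \<beta> \<gamma> \<mu> St :: "real \<Rightarrow> real" and dS :: real
  assumes "holder_on01 \<Lambda>" "holder_on01 \<beta>" "holder_on01 \<gamma>" "holder_on01 \<mu>"
    and "\<forall>x\<in>{0..1}. \<Lambda> x > 0 \<and> \<beta> x > 0 \<and> \<gamma> x > 0 \<and> \<mu> x > 0"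
    and "dS > 0"
    and "pos_sol_scalar dS \<Lambda> St"
    and "{x\<in>{0..1}. \<beta> x * St x > \<gamma> x + \<mu> x} \<noteq> {}"
  shows "\<forall>(dI :: nat \<Rightarrow> real) (S :: nat \<Rightarrow> real \<Rightarrow> real) (I :: nat \<Rightarrow> real \<Rightarrow> real).
           (\<forall>n. dI n > 0) \<and> dI \<longlonglongrightarrow> 0 \<and>
           (\<forall>n. pos_sol_E dS (dI n) \<Lambda> \<beta> \<gamma> \<mu> (S n) (I n)) \<longrightarrow>
           (\<exists>r S0 I0. strict_mono r \<and> continuous_on {0..1} S0 \<and>
              (\<forall>x\<in>{0..1}. S0 x > 0) \<and>
              uniform_limit {0..1} (\<lambda>n. S (r n)) S0 sequentially \<and>
              I0 > 0 \<and> (\<lambda>n. integral {0..1} (I (r n))) \<longlonglongrightarrow> I0)"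
proof (intro allI impI)
  fix dI :: "nat \<Rightarrow> real" and S I :: "nat \<Rightarrow> real \<Rightarrow> real"
  assume sols: "(\<forall>n. dI n > 0) \<and> dI \<longlonglongrightarrow> 0 \<and> (\<forall>n. pos_sol_E dS (dI n) \<Lambda> \<beta> \<gamma> \<mu> (S n) (I n))"
  obtain \<Lambda>max \<beta>max \<mu>min Smin Smax where "sis_model \<Lambda> \<beta> \<gamma> \<mu> dS \<Lambda>max \<beta>max \<mu>min Smin Smax"
    using sis_model_exists[OF holder_on01_imp_continuous_on[OF assms(1)]
        holder_on01_imp_continuous_on[OF assms(2)] holder_on01_imp_continuous_on[OF assms(3)]
        holder_on01_imp_continuous_on[OF assms(4)] _ assms(6)] assms(5) by metis
  then interpret sis_model \<Lambda> \<beta> \<gamma> \<mu> dS \<Lambda>max \<beta>max \<mu>min Smin Smax .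
  obtain xs where xs: "xs \<in> {0..1}" "\<gamma> xs + \<mu> xs < \<beta> xs * St xs"
    using assms(8) by auto
  obtain r S0 I0 where "strict_mono r" "continuous_on {0..1} S0"
    "\<And>x. x \<in> {0..1} \<Longrightarrow> 0 < S0 x" "uniform_limit {0..1} (\<lambda>n. S (r n)) S0 sequentially"
    "0 < I0" "(\<lambda>n. integral {0..1} (I (r n))) \<longlonglongrightarrow> I0"
    using sol_subsequence_limits[OF assms(7) xs] sols by metis
  then show "\<exists>r S0 I0. strict_mono r \<and> continuous_on {0..1} S0 \<and> (\<forall>x\<in>{0..1}. S0 x > 0) \<and>
      uniform_limit {0..1} (\<lambda>n. S (r n)) S0 sequentially \<and>
      I0 > 0 \<and> (\<lambda>n. integral {0..1} (I (r n))) \<longlonglongrightarrow> I0"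
    by blast
qed

end
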